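(* Let $G=(V,E)$ be a finite connected chordal graph. (i) If $\operatorname{diam}(G)<2\operatorname{rad}(G)$ then, for every vertices $s\in V$ and $t\in F(s)$, there is a vertex $w\in I(s,t)\cap C(G)$ such that $t\in F(w)$. (ii) If $\operatorname{diam}(G)=2\operatorname{rad}(G)$ then, for every vertices $s\in V$ and $t\in F(s)$, there is a vertex $w\in I(s,t)\cap C^1(G)$ such that $t\in F(w)$.
   Context: A graph is chordal if every induced cycle of length at least 4 has a chord. $d$ is the shortest-path distance, $e(v)=\max_u d(v,u)$, $\operatorname{rad}(G)=\min_v e(v)$, $\operatorname{diam}(G)=\max_v e(v)$. $F(s)=\{v: d(v,s)=e(s)\}$; $C(G)=\{c: e(c)=\operatorname{rad}(G)\}$; $C^1(G)=\{v: e(v)\le\operatorname{rad}(G)+1\}$; $I(u,v)=\{x: d(u,x)+d(x,v)=d(u,v)\}$. *)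

theory Defs
  imports Main
begin

definition graph :: "'a set \<Rightarrow> ('a \<Rightarrow> 'a \<Rightarrow> bool) \<Rightarrow> bool" where
  "graph V E \<longleftrightarrow> finite V \<and> V \<noteq> {} \<and> (\<forall>u v. E u v \<longrightarrow> u \<in> V \<and> v \<in> V)
     \<and> (\<forall>u v. E u v \<longrightarrow> E v u) \<and> (\<forall>v. \<not> E v v)"

definition walk :: "'a set \<Rightarrow> ('a \<Rightarrow> 'a \<Rightarrow> bool) \<Rightarrow> 'a list \<Rightarrow> bool" where
  "walk V E p \<longleftrightarrow> p \<noteq> [] \<and> set p \<subseteq> V \<and> (\<forall>i. Suc i < length p \<longrightarrow> E (p ! i) (p ! Suc i))"

definition connected :: "'a set \<Rightarrow> ('a \<Rightarrow> 'a \<Rightarrow> bool) \<Rightarrow> bool" where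
  "connected V E \<longleftrightarrow> (\<forall>u\<in>V. \<forall>v\<in>V. \<exists>p. walk V E p \<and> hd p = u \<and> last p = v)"

definition dist :: "'a set \<Rightarrow> ('a \<Rightarrow> 'a \<Rightarrow> bool) \<Rightarrow> 'a \<Rightarrow> 'a \<Rightarrow> nat" where
  "dist V E u v = (LEAST n. \<exists>p. walk V E p \<and> hd p = u \<and> last p = v \<and> length p = Suc n)"

definition cycle :: "'a set \<Rightarrow> ('a \<Rightarrow> 'a \<Rightarrow> bool) \<Rightarrow> 'a list \<Rightarrow> bool" where
  "cycle V E c \<longleftrightarrow> length c \<ge> 3 \<and> distinct c \<and> set c \<subseteq> V
     \<and> (\<forall>i < length c. E (c ! i) (c ! ((i + 1) mod length c)))"

definition has_chord :: "('a \<Rightarrow> 'a \<Rightarrow> bool) \<Rightarrow> 'a list \<Rightarrow> bool" where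
  "has_chord E c \<longleftrightarrow> (\<exists>i j. i < length c \<and> j < length c \<and> i \<noteq> j
     \<and> j \<noteq> (i + 1) mod length c \<and> i \<noteq> (j + 1) mod length c \<and> E (c ! i) (c ! j))"

text \<open>Chordal: every cycle of length at least 4 has a chord (equivalently, every
  induced cycle of length at least 4 has a chord, i.e. there is none).\<close>
definition chordal :: "'a set \<Rightarrow> ('a \<Rightarrow> 'a \<Rightarrow> bool) \<Rightarrow> bool" where
  "chordal V E \<longleftrightarrow> (\<forall>c. cycle V E c \<and> length c \<ge> 4 \<longrightarrow> has_chord E c)"

definition ecc :: "'a set \<Rightarrow> ('a \<Rightarrow> 'a \<Rightarrow> bool) \<Rightarrow> 'a \<Rightarrow> nat" where
  "ecc V E v = Max ((\<lambda>u. dist V E v u) ` V)"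

definition rad :: "'a set \<Rightarrow> ('a \<Rightarrow> 'a \<Rightarrow> bool) \<Rightarrow> nat" where
  "rad V E = Min (ecc V E ` V)"

definition diam :: "'a set \<Rightarrow> ('a \<Rightarrow> 'a \<Rightarrow> bool) \<Rightarrow> nat" where
  "diam V E = Max (ecc V E ` V)"

definition far :: "'a set \<Rightarrow> ('a \<Rightarrow> 'a \<Rightarrow> bool) \<Rightarrow> 'a \<Rightarrow> 'a set" where
  "far V E s = {v \<in> V. dist V E v s = ecc V E s}"

definition center :: "'a set \<Rightarrow> ('a \<Rightarrow> 'a \<Rightarrow> bool) \<Rightarrow> 'a set" where
  "center V E = {c \<in> V. ecc V E c = rad V E}"

definition center1 :: "'a set \<Rightarrow> ('a \<Rightarrow> 'a \<Rightarrow> bool) \<Rightarrow> 'a set" where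
  "center1 V E = {v \<in> V. ecc V E v \<le> rad V E + 1}"

definition interval :: "'a set \<Rightarrow> ('a \<Rightarrow> 'a \<Rightarrow> bool) \<Rightarrow> 'a \<Rightarrow> 'a \<Rightarrow> 'a set" where
  "interval V E u v = {x \<in> V. dist V E u x + dist V E x v = dist V E u v}"

end

theory Submission
  imports Defs
begin

(*
  Two metric consequences of chordality drive the argument: the triangle condition, and the
  alpha_1-metric inequality d(u,v) + d(w,x) \<le> d(u,x) for every edge vw with d(u,w) = d(u,v) + 1
  and d(v,x) = d(w,x) + 1.  Both come from one fact: for an edge ab, a walk from a neighbour of a
  to a neighbour of b that avoids a and b passes through a common neighbour of a and b.

  Let e(v) > rad(G) and 2 e(v) \<ge> diam(G) + 3, and let c be central.  For u in F(v), some
  neighbour of v lies on shortest paths both to c and to u, and these sets of common next steps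
  form a chain as u ranges over F(v).  A vertex in all of them is a neighbour of v of smaller
  eccentricity.  Repeating this from s, every step stays in I(s,t) and keeps t farthest, and
  the descent can be continued until e \<le> rad(G) if diam(G) < 2 rad(G), resp. until
  e \<le> rad(G) + 1 if diam(G) = 2 rad(G).
*)

lemma successively_take: "successively P xs \<Longrightarrow> successively P (take n xs)"
  by (metis append_take_drop_id successively_append_iff)

lemma successively_drop: "successively P xs \<Longrightarrow> successively P (drop n xs)"
  by (metis append_take_drop_id successively_append_iff)

lemma walk_iff: "walk V E p \<longleftrightarrow> p \<noteq> [] \<and> set p \<subseteq> V \<and> successively E p"
  unfolding walk_def successively_conv_nth by blast

lemma walk_append:
  assumes "walk V E p" "walk V E q" "last p = hd q"
  shows "walk V E (p @ tl q) \<and> hd (p @ tl q) = hd p \<and> last (p @ tl q) = last q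
     \<and> length (p @ tl q) = length p + length q - 1 \<and> set (p @ tl q) \<subseteq> set p \<union> set q"
proof -
  obtain a q' where q: "q = a # q'" using assms(2) by (cases q) (auto simp: walk_iff)
  have "p \<noteq> []" using assms(1) by (simp add: walk_iff)
  moreover have "successively E (p @ q')"
    using assms q by (auto simp: walk_iff successively_append_iff successively_Cons)
  moreover have "last (p @ q') = last q" using q assms(3) \<open>p \<noteq> []\<close> by (cases "q' = []") auto
  ultimately show ?thesis using assms q by (auto simp: walk_iff)
qed

lemma successively_distinct_sublist:
  assumes "successively P xs" "xs \<noteq> []"
  shows "\<exists>ys. ys \<noteq> [] \<and> distinct ys \<and> successively P ys \<and> set ys \<subseteq> set xs
     \<and> hd ys = hd xs \<and> last ys = last xs"
  using assms
proof (induction xs rule: measure_induct_rule[where f = length])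
  case (less xs)
  show ?case
  proof (cases "distinct xs")
    case False
    then obtain as bs cs y where xs: "xs = as @ [y] @ bs @ [y] @ cs"
      using not_distinct_decomp by blast
    define xs' where "xs' = as @ [y] @ cs"
    have "successively P (y # cs)"
      using less.prems(1) successively_append_iff[of P "as @ [y] @ bs" "y # cs"] unfolding xs by simp
    then have "successively P xs'"
      using less.prems(1) unfolding xs xs'_def by (auto simp: successively_append_iff)
    moreover have "hd xs' = hd xs" "last xs' = last xs" "set xs' \<subseteq> set xs" "length xs' < length xs"
      unfolding xs xs'_def by (cases as; cases cs; auto)+
    ultimately show ?thesis using less.IH[of xs'] unfolding xs'_def by fastforce
  qed (use less.prems in blast)
qed

lemma successively_cycle:
  assumes "distinct p" "3 \<le> length p" "set p \<subseteq> V" "successively E p" "E (last p) (hd p)"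
  shows "cycle V E p"
  unfolding cycle_def
proof (intro conjI allI impI)
  fix i assume i: "i < length p"
  show "E (p ! i) (p ! ((i + 1) mod length p))"
  proof (cases "Suc i < length p")
    case True
    then show ?thesis using successively_nth[OF assms(4) True] by simp
  next
    case False
    then have "Suc i = length p" using i by simp
    then have "i = length p - 1" "(i + 1) mod length p = 0" by auto
    then show ?thesis using assms(5) i by (metis hd_conv_nth last_conv_nth list.size(3) not_less0)
  qed
qed (use assms in auto)

lemma has_chord_ordered:
  assumes "has_chord E p" and sym: "\<And>u v. E u v \<Longrightarrow> E v u"
  shows "\<exists>i j. i + 2 \<le> j \<and> j < length p \<and> \<not> (i = 0 \<and> j = length p - 1) \<and> E (p ! i) (p ! j)"
proof -
  obtain i j where "i < length p" "j < length p" "i \<noteq> j" "j \<noteq> (i + 1) mod length p"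
    "i \<noteq> (j + 1) mod length p" "E (p ! i) (p ! j)"
    using assms(1) unfolding has_chord_def by blast
  then obtain i j where ij: "i < j" "j < length p" "j \<noteq> (i + 1) mod length p"
    "i \<noteq> (j + 1) mod length p" "E (p ! i) (p ! j)"
    using sym by (metis linorder_neqE_nat)
  then show ?thesis by (intro exI[of _ i] exI[of _ j]) (auto split: if_splits simp: mod_if)
qed

locale connected_graph =
  fixes V :: "'a set" and E :: "'a \<Rightarrow> 'a \<Rightarrow> bool"
  assumes graph: "graph V E" and connected: "connected V E"
begin

abbreviation "d \<equiv> dist V E"

lemma edge_sym: "E u v \<Longrightarrow> E v u"
  using graph unfolding graph_def by blast

lemma edge_irrefl: "\<not> E v v"
  using graph unfolding graph_def by blast

lemma edge_vertices: "E u v \<Longrightarrow> u \<in> V \<and> v \<in> V"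
  using graph unfolding graph_def by blast

lemma finite_V: "finite V"
  using graph unfolding graph_def by blast

lemma V_nonempty: "V \<noteq> {}"
  using graph unfolding graph_def by blast

lemma walk_rev: "walk V E p \<Longrightarrow> walk V E (rev p)"
  unfolding walk_iff using edge_sym by (auto elim: successively_mono)

subsection \<open>The graph metric\<close>

lemma shortest_walk:
  assumes "u \<in> V" "v \<in> V"
  obtains p where "walk V E p" "hd p = u" "last p = v" "length p = Suc (d u v)"
proof -
  from connected assms obtain p where "walk V E p" "hd p = u" "last p = v"
    unfolding connected_def by blast
  then have "\<exists>n p. walk V E p \<and> hd p = u \<and> last p = v \<and> length p = Suc n"
    by (intro exI[of _ "length p - 1"] exI[of _ p]) (auto simp: walk_def)
  then have "\<exists>p. walk V E p \<and> hd p = u \<and> last p = v \<and> length p = Suc (d u v)"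
    unfolding dist_def by (rule LeastI_ex)
  then show thesis using that by blast
qed

lemma dist_le_walk:
  assumes "walk V E p" "hd p = u" "last p = v"
  shows "d u v \<le> length p - 1"
proof -
  have "length p = Suc (length p - 1)" using assms(1) by (cases p) (auto simp: walk_def)
  then show ?thesis unfolding dist_def using assms by (intro Least_le) blast
qed

lemma dist_sym: assumes "u \<in> V" "v \<in> V" shows "d u v = d v u"
proof -
  have "d x y \<le> d y x" if xy: "x \<in> V" "y \<in> V" for x y
  proof -
    obtain p where p: "walk V E p" "hd p = y" "last p = x" "length p = Suc (d y x)"
      using shortest_walk[OF xy(2,1)] .
    then have "hd (rev p) = x" "last (rev p) = y" by (auto simp: hd_rev last_rev walk_def)
    then show ?thesis using dist_le_walk[OF walk_rev[OF p(1)]] p by auto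
  qed
  then show ?thesis using assms by (simp add: le_antisym)
qed

lemma dist_triangle: assumes "u \<in> V" "v \<in> V" "w \<in> V" shows "d u w \<le> d u v + d v w"
proof -
  obtain p where p: "walk V E p" "hd p = u" "last p = v" "length p = Suc (d u v)"
    using shortest_walk assms by blast
  obtain q where q: "walk V E q" "hd q = v" "last q = w" "length q = Suc (d v w)"
    using shortest_walk assms by blast
  show ?thesis using walk_append[OF p(1) q(1)] p q dist_le_walk[of "p @ tl q" u w] by auto
qed

lemma dist_self: "u \<in> V \<Longrightarrow> d u u = 0"
  using dist_le_walk[of "[u]" u u] by (auto simp: walk_def)

lemma dist_eq_0D: assumes "u \<in> V" "v \<in> V" "d u v = 0" shows "u = v"
proof -
  obtain p where "walk V E p" "hd p = u" "last p = v" "length p = Suc (d u v)"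
    using shortest_walk assms by blast
  then show ?thesis using assms(3) by (cases p) auto
qed

lemma dist_edge: assumes "E u v" shows "d u v = 1"
proof -
  have "walk V E [u, v]" using assms edge_vertices by (auto simp: walk_iff)
  then have "d u v \<le> 1" using dist_le_walk[of "[u, v]" u v] by auto
  moreover have "u \<noteq> v" using assms edge_irrefl by auto
  ultimately show ?thesis using dist_eq_0D edge_vertices assms by fastforce
qed

lemma dist_eq_1D: assumes "u \<in> V" "v \<in> V" "d u v = 1" shows "E u v"
proof -
  obtain p where p: "walk V E p" "hd p = u" "last p = v" "length p = Suc (d u v)"
    using shortest_walk assms by blast
  then obtain a b where "p = [a, b]" using assms(3) by (cases p; cases "tl p") auto
  then show ?thesis using p by (auto simp: walk_iff)
qed

lemma dist_edge_le: assumes "E x y" "u \<in> V" shows "d x u \<le> d y u + 1"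
  using dist_triangle[of x y u] dist_edge[OF assms(1)] edge_vertices[OF assms(1)] assms(2) by auto

lemma shortest_walk_nth:
  assumes p: "walk V E p" "hd p = a" "last p = b" "length p = Suc (d a b)" and i: "i < length p"
  shows "d a (p ! i) = i \<and> d (p ! i) b = d a b - i"
proof -
  have p': "set p \<subseteq> V" "p \<noteq> []" "successively E p" using p(1) by (auto simp: walk_iff)
  then have V: "a \<in> V" "b \<in> V" "p ! i \<in> V" using p i by auto
  have "walk V E (take (Suc i) p)"
    using p' by (auto simp: walk_iff dest: in_set_takeD intro: successively_take)
  moreover have "hd (take (Suc i) p) = a" using p p' by (simp add: hd_take)
  moreover have "last (take (Suc i) p) = p ! i" using i by (simp add: take_Suc_conv_app_nth)
  ultimately have to_i: "d a (p ! i) \<le> i" using dist_le_walk i by fastforce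
  have "walk V E (drop i p)"
    using p' i by (auto simp: walk_iff dest: in_set_dropD intro: successively_drop)
  moreover have "hd (drop i p) = p ! i" "last (drop i p) = b"
    using p i by (simp_all add: hd_drop_conv_nth)
  ultimately have from_i: "d (p ! i) b \<le> length p - i - 1" using dist_le_walk i by fastforce
  show ?thesis using dist_triangle[OF V(1,3,2)] to_i from_i p(4) i by auto
qed

lemma geodesic_walk:
  assumes "a \<in> V" "b \<in> V"
  obtains p where "walk V E p" "hd p = a" "last p = b" "\<forall>z\<in>set p. d a z + d z b = d a b"
proof -
  obtain p where p: "walk V E p" "hd p = a" "last p = b" "length p = Suc (d a b)"
    using shortest_walk assms by blast
  have "d a z + d z b = d a b" if "z \<in> set p" for z
    using that shortest_walk_nth[OF p] p(4) by (auto simp: in_set_conv_nth)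
  then show thesis using that p by blast
qed

lemma closer_walk:
  assumes "a \<in> V" "b \<in> V" "a \<noteq> b"
  obtains q where "walk V E q" "E a (hd q)" "last q = b" "\<forall>z\<in>set q. d z b < d a b"
proof -
  obtain p where p: "walk V E p" "hd p = a" "last p = b" "length p = Suc (d a b)"
    using shortest_walk assms by blast
  have "d a b \<noteq> 0" using dist_eq_0D assms by blast
  then obtain x y p' where xy: "p = x # y # p'" using p(4) by (cases p; cases "tl p") auto
  have "d z b < d a b" if z: "z \<in> set (y # p')" for z
  proof -
    obtain i where i: "i < length (y # p')" "z = (y # p') ! i"
      using z by (metis in_set_conv_nth)
    then have "Suc i < length p" "z = p ! Suc i" using xy by simp_all
    then have "d z b = d a b - Suc i" using shortest_walk_nth[OF p] by blast
    then show ?thesis using \<open>d a b \<noteq> 0\<close> by linarith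
  qed
  moreover have "walk V E (y # p')" "E a y" "last (y # p') = b"
    using p xy by (auto simp: walk_iff)
  ultimately show thesis using that[of "y # p'"] by simp
qed

definition towards :: "'a \<Rightarrow> 'a \<Rightarrow> 'a set" where
  "towards v u = {w. E v w \<and> d w u + 1 = d v u}"

lemma towards_nonempty:
  assumes "v \<in> V" "u \<in> V" "v \<noteq> u"
  shows "towards v u \<noteq> {}"
proof -
  obtain q where q: "walk V E q" "E v (hd q)" "last q = u" "\<forall>z\<in>set q. d z u < d v u"
    using closer_walk[OF assms] .
  have "hd q \<in> set q" using q(1) by (auto simp: walk_iff)
  then show ?thesis
    using q dist_edge_le[OF q(2) assms(2)] unfolding towards_def by force
qed

lemma interval_trans:
  assumes "s \<in> V" "t \<in> V" "w \<in> interval V E s t" "x \<in> interval V E w t"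
  shows "x \<in> interval V E s t"
proof -
  have "w \<in> V" "x \<in> V" using assms(3,4) unfolding interval_def by auto
  then show ?thesis
    using assms dist_triangle[of s w x] dist_triangle[of s x t] unfolding interval_def by auto
qed

subsection \<open>Eccentricities\<close>

lemma dist_le_ecc: "v \<in> V \<Longrightarrow> u \<in> V \<Longrightarrow> d v u \<le> ecc V E v"
  unfolding ecc_def using finite_V by (intro Max_ge) auto

lemma ecc_attained: "v \<in> V \<Longrightarrow> \<exists>u\<in>V. d v u = ecc V E v"
proof -
  have "ecc V E v \<in> d v ` V"
    unfolding ecc_def using finite_V V_nonempty by (intro Max_in) auto
  then show "\<exists>u\<in>V. d v u = ecc V E v" by auto
qed

lemma ecc_le: "(\<And>u. u \<in> V \<Longrightarrow> d v u \<le> k) \<Longrightarrow> ecc V E v \<le> k"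
  unfolding ecc_def using finite_V V_nonempty by (subst Max_le_iff) auto

lemma rad_le_ecc: "v \<in> V \<Longrightarrow> rad V E \<le> ecc V E v"
  unfolding rad_def using finite_V by (intro Min_le) auto

lemma center_exists: "\<exists>c\<in>V. ecc V E c = rad V E"
proof -
  have "rad V E \<in> ecc V E ` V"
    unfolding rad_def using finite_V V_nonempty by (intro Min_in) auto
  then show ?thesis by auto
qed

lemma ecc_le_diam: "v \<in> V \<Longrightarrow> ecc V E v \<le> diam V E"
  unfolding diam_def using finite_V by (intro Max_ge) auto

lemma dist_le_diam: "u \<in> V \<Longrightarrow> v \<in> V \<Longrightarrow> d u v \<le> diam V E"
  using dist_le_ecc ecc_le_diam le_trans by blast

lemma far_descent:
  assumes descent: "\<And>v. v \<in> V \<Longrightarrow> T < ecc V E v \<Longrightarrow> \<exists>w. E v w \<and> ecc V E w < ecc V E v"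
    and "s \<in> V" "t \<in> far V E s"
  shows "\<exists>w\<in>interval V E s t. ecc V E w \<le> T \<and> t \<in> far V E w"
  using assms(2,3)
proof (induction "ecc V E s" arbitrary: s rule: less_induct)
  case less
  have t: "t \<in> V" "d s t = ecc V E s"
    using less.prems dist_sym unfolding far_def by auto
  show ?case
  proof (cases "ecc V E s \<le> T")
    case True
    then show ?thesis using less.prems t dist_self unfolding interval_def by auto
  next
    case False
    then obtain w where w: "E s w" "ecc V E w < ecc V E s" using descent less.prems by force
    have "w \<in> V" using edge_vertices w by auto
    have "d s t \<le> d w t + 1" "d w t \<le> ecc V E w"
      using dist_edge_le[OF w(1) t(1)] dist_le_ecc[OF \<open>w \<in> V\<close> t(1)] .
    then have wt: "d w t = ecc V E w" "d s t = d w t + 1" using w(2) t(2) by linarith+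
    then have "t \<in> far V E w" using t(1) \<open>w \<in> V\<close> dist_sym unfolding far_def by auto
    then obtain x where "x \<in> interval V E w t" "ecc V E x \<le> T" "t \<in> far V E x"
      using less.hyps[OF w(2) \<open>w \<in> V\<close>] by blast
    moreover have "w \<in> interval V E s t"
      using \<open>w \<in> V\<close> wt dist_edge[OF w(1)] unfolding interval_def by auto
    ultimately show ?thesis using interval_trans less.prems(1) t(1) by blast
  qed
qed

end

locale chordal_graph = connected_graph +
  assumes chordal: "chordal V E"
begin

subsection \<open>Common neighbours in chordal graphs\<close>

lemma cycle_common_neighbour:
  assumes "distinct p" "length p \<ge> 3" "set p \<subseteq> V" "successively E p" "E (last p) (hd p)"
  shows "\<exists>z\<in>set p. z \<noteq> hd p \<and> z \<noteq> last p \<and> E (hd p) z \<and> E z (last p)"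
  using assms
proof (induction p rule: measure_induct_rule[where f = length])
  case (less p)
  define n where "n = length p"
  show ?case
  proof (cases "n = 3")
    case True
    then obtain a b c where "p = [a, b, c]" unfolding n_def
      by (cases p; cases "tl p"; cases "tl (tl p)"; cases "tl (tl (tl p))") auto
    then show ?thesis using less.prems by auto
  next
    case False
    then have "4 \<le> n" using less.prems n_def by auto
    then have "has_chord E p"
      using chordal successively_cycle[OF less.prems] unfolding chordal_def n_def by blast
    then obtain i j where ij: "i + 2 \<le> j" "j < n" "\<not> (i = 0 \<and> j = n - 1)" "E (p ! i) (p ! j)"
      using has_chord_ordered edge_sym unfolding n_def by blast
    define p' where "p' = take (Suc i) p @ drop j p"
    have "last (take (Suc i) p) = p ! i" "hd (drop j p) = p ! j"
      using ij n_def by (simp_all add: take_Suc_conv_app_nth hd_drop_conv_nth)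
    then have "successively E p'" unfolding p'_def successively_append_iff
      using ij less.prems(4) by (auto intro: successively_take successively_drop)
    moreover have "distinct p'" unfolding p'_def using less.prems(1) ij
      by (auto simp: set_take_disj_set_drop_if_distinct)
    moreover have "hd p' = hd p" "last p' = last p" "set p' \<subseteq> set p" "3 \<le> length p'" "length p' < n"
      unfolding p'_def using ij n_def \<open>4 \<le> n\<close>
      by (auto simp: hd_append dest: in_set_takeD in_set_dropD)
    ultimately show ?thesis using less.IH[of p'] less.prems n_def by (metis subset_trans subsetD)
  qed
qed

text \<open>The common neighbour is found on the cycle closed by the edge \<open>xy\<close> and a shortcut of the walk.\<close>

lemma walk_common_neighbour:
  assumes "E x y" "walk V E q" "E x (hd q)" "E (last q) y" "x \<notin> set q" "y \<notin> set q"
  shows "\<exists>z\<in>set q. E x z \<and> E z y"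
proof -
  have q: "q \<noteq> []" "set q \<subseteq> V" "successively E q" using assms(2) by (auto simp: walk_iff)
  obtain q' where q': "q' \<noteq> []" "distinct q'" "successively E q'" "set q' \<subseteq> set q"
    "hd q' = hd q" "last q' = last q"
    using successively_distinct_sublist[OF q(3,1)] by blast
  define p where "p = x # q' @ [y]"
  have "distinct p" using q' assms edge_irrefl unfolding p_def by auto
  moreover have "length p \<ge> 3" using q' unfolding p_def by (cases q') auto
  moreover have "set p \<subseteq> V" using q q' edge_vertices assms(1) unfolding p_def by auto
  moreover have "successively E p" using q' assms unfolding p_def
    by (auto simp: successively_append_iff successively_Cons)
  moreover have "E (last p) (hd p)" using assms(1) edge_sym unfolding p_def by auto
  ultimately show ?thesis using cycle_common_neighbour q' unfolding p_def by fastforce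
qed

lemma common_neighbour_of_walks:
  assumes "E x y" "walk V E p" "walk V E q" "E x (hd p)" "E y (hd q)" "last p = last q"
    and "x \<notin> set p \<union> set q" "y \<notin> set p \<union> set q"
  shows "\<exists>z\<in>set p \<union> set q. E x z \<and> E z y"
proof -
  define W where "W = p @ tl (rev q)"
  have "walk V E (rev q)" "hd (rev q) = last q" "last (rev q) = hd q"
    using walk_rev assms(3) by (auto simp: walk_iff hd_rev last_rev)
  then have W: "walk V E W" "hd W = hd p" "last W = hd q" "set W \<subseteq> set p \<union> set q"
    using walk_append[OF assms(2), of "rev q"] assms(6) unfolding W_def by auto
  have "E x (hd W)" "E (last W) y" using W(2,3) assms(4,5) edge_sym by simp_all
  moreover have "x \<notin> set W" "y \<notin> set W" using W(4) assms(7,8) by blast+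
  ultimately obtain z where "z \<in> set W" "E x z" "E z y"
    using walk_common_neighbour[OF assms(1) W(1)] by blast
  then show ?thesis using W(4) by blast
qed

lemma triangle_condition:
  assumes "E x y" "u \<in> V" "d x u = m" "d y u = m" "m \<ge> 1"
  shows "\<exists>z. E x z \<and> E z y \<and> d z u + 1 = m"
proof -
  have V: "x \<in> V" "y \<in> V" using edge_vertices assms(1) by auto
  have "x \<noteq> u" "y \<noteq> u" using assms dist_self by auto
  obtain p where p: "walk V E p" "E x (hd p)" "last p = u" "\<forall>z\<in>set p. d z u < m"
    using closer_walk[OF V(1) assms(2) \<open>x \<noteq> u\<close>] assms(3) by blast
  obtain q where q: "walk V E q" "E y (hd q)" "last q = u" "\<forall>z\<in>set q. d z u < m"
    using closer_walk[OF V(2) assms(2) \<open>y \<noteq> u\<close>] assms(4) by blast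
  have "last p = last q" "x \<notin> set p \<union> set q" "y \<notin> set p \<union> set q"
    using p(3,4) q(3,4) assms(3,4) by auto
  then obtain z where z: "z \<in> set p \<union> set q" "E x z" "E z y"
    using common_neighbour_of_walks[OF assms(1) p(1) q(1) p(2) q(2)] by blast
  have "d z u < m" using z(1) p(4) q(4) by blast
  moreover have "m \<le> d z u + 1" using dist_edge_le[OF z(2) assms(2)] assms(3) by simp
  ultimately show ?thesis using z by auto
qed

lemma alpha1_metric:
  assumes vw: "E v w" and "u \<in> V" "x \<in> V"
    and uw: "d u w = d u v + 1" and vx: "d v x = d w x + 1"
  shows "d u v + d w x \<le> d u x"
proof (rule ccontr)
  assume short: "\<not> ?thesis"
  have V: "v \<in> V" "w \<in> V" using edge_vertices vw by auto
  have sym: "d u x = d x u" "d u v = d v u" "d u w = d w u" "d x v = d v x" "d x w = d w x"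
    using dist_sym assms V by auto
  have "v \<noteq> u" "w \<noteq> x" using short uw vx dist_self assms by auto
  obtain qw where qw: "walk V E qw" "E w (hd qw)" "last qw = x" "\<forall>z\<in>set qw. d z x < d w x"
    using closer_walk[OF V(2) \<open>x \<in> V\<close> \<open>w \<noteq> x\<close>] .
  obtain r where r: "walk V E r" "hd r = x" "last r = u" "\<forall>z\<in>set r. d x z + d z u = d x u"
    using geodesic_walk[OF \<open>x \<in> V\<close> \<open>u \<in> V\<close>] .
  obtain qv where qv: "walk V E qv" "E v (hd qv)" "last qv = u" "\<forall>z\<in>set qv. d z u < d v u"
    using closer_walk[OF V(1) \<open>u \<in> V\<close> \<open>v \<noteq> u\<close>] .
  define p where "p = qw @ tl r"
  have p: "walk V E p" "E w (hd p)" "last p = u" "set p \<subseteq> set qw \<union> set r"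
    using walk_append[OF qw(1) r(1)] qw r unfolding p_def by auto
  have "v \<notin> set r" "w \<notin> set r" using r(4) short uw vx sym by fastforce+
  moreover have "v \<notin> set qw" "w \<notin> set qw" "v \<notin> set qv" "w \<notin> set qv"
    using qw(4) qv(4) vx uw sym by fastforce+
  moreover have "last p = last qv" using p(3) qv(3) by simp
  ultimately obtain z where z: "z \<in> set p \<union> set qv" "E w z" "E z v"
    using common_neighbour_of_walks[OF edge_sym[OF vw] p(1) qv(1) p(2) qv(2)] p(4) by blast
  have "z \<in> V" using z edge_vertices by auto
  have near: "d v x \<le> d z x + 1" "d w u \<le> d z u + 1"
    using dist_edge_le[OF edge_sym[OF z(3)] \<open>x \<in> V\<close>] dist_edge_le[OF z(2) \<open>u \<in> V\<close>] .
  then have "z \<notin> set qw" "z \<notin> set qv" using qw(4) qv(4) uw vx sym by fastforce+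
  then have "z \<in> set r" using z(1) p(4) by blast
  then have "d z x + d z u = d u x" using r(4) dist_sym[OF \<open>x \<in> V\<close> \<open>z \<in> V\<close>] sym by auto
  then show False using near short uw vx sym by linarith
qed

lemma towards_clique:
  assumes "w1 \<in> towards v c" "w2 \<in> towards v c" "w1 \<noteq> w2" "c \<in> V"
  shows "E w1 w2"
proof -
  have e: "E v w1" "E v w2" and h: "d w1 c + 1 = d v c" "d w2 c + 1 = d v c"
    using assms(1,2) unfolding towards_def by auto
  have V: "w1 \<in> V" "w2 \<in> V" using edge_vertices e by auto
  have "w1 \<noteq> c" using h assms(3,4) dist_self dist_eq_0D[OF V(2) assms(4)] by auto
  obtain q where q: "walk V E q" "E w1 (hd q)" "last q = c" "\<forall>z\<in>set q. d z c < d w1 c"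
    using closer_walk[OF V(1) assms(4) \<open>w1 \<noteq> c\<close>] .
  obtain r where r: "walk V E r" "hd r = w2" "last r = c" "\<forall>z\<in>set r. d w2 z + d z c = d w2 c"
    using geodesic_walk[OF V(2) assms(4)] .
  have "w1 \<notin> set r" using r(4) h dist_eq_0D[OF V(2,1)] assms(3) by fastforce
  moreover have "v \<notin> set q \<union> set r" "w1 \<notin> set q" using q(4) r(4) h by fastforce+
  moreover have "E v (hd r)" "last q = last r" using e(2) q(3) r(2,3) by simp_all
  ultimately obtain z where z: "z \<in> set q \<union> set r" "E w1 z" "E z v"
    using common_neighbour_of_walks[OF edge_sym[OF e(1)] q(1) r(1) q(2)] by blast
  have "d v c \<le> d z c + 1" using dist_edge_le[OF edge_sym[OF z(3)] assms(4)] .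
  then have "z \<in> set r" using z(1) q(4) h by fastforce
  then have "z = w2"
    using r(4) h \<open>d v c \<le> d z c + 1\<close> dist_eq_0D[OF V(2)] edge_vertices z(2) by fastforce
  then show ?thesis using z by simp
qed

subsection \<open>Descent of the eccentricity\<close>

context
  fixes v c :: 'a
  assumes v: "v \<in> V" and c: "c \<in> V"
    and two_le_dist: "2 \<le> d v c" and ecc_less: "ecc V E c < ecc V E v"
begin

lemma dist_to_c_le: "u \<in> V \<Longrightarrow> d u c \<le> ecc V E v - 1"
  using dist_le_ecc[OF c] dist_sym[OF c] ecc_less by fastforce

lemma towards_c_dist_le:
  assumes w: "w \<in> towards v c" and u: "u \<in> V" and "ecc V E v \<le> d v u + 1"
  shows "d w u \<le> d v u"
proof (rule ccontr)
  assume away: "\<not> d w u \<le> d v u"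
  have vw: "E v w" "d w c + 1 = d v c" using w unfolding towards_def by auto
  then have "w \<in> V" using edge_vertices by auto
  have "d w u = d v u + 1" using dist_edge_le[OF edge_sym[OF vw(1)] u] away by simp
  then have "d u w = d u v + 1" using dist_sym u v \<open>w \<in> V\<close> by simp
  then have "d u v + d w c \<le> d u c" using alpha1_metric[OF vw(1) u c] vw(2) by simp
  then show False
    using dist_to_c_le[OF u] dist_sym[OF u v] two_le_dist vw(2) assms(3) by linarith
qed

lemma towards_c_meets_towards_far:
  assumes u: "u \<in> V" and vu: "d v u = ecc V E v"
  shows "towards v c \<inter> towards v u \<noteq> {}"
proof -
  have "v \<noteq> u" using vu ecc_less dist_self v by auto
  then obtain w where w: "E v w" "d w u + 1 = d v u"
    using towards_nonempty[OF v u] unfolding towards_def by auto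
  have "w \<in> V" using edge_vertices w by auto
  consider "d w c + 1 = d v c" | "d w c = d v c + 1" | "d w c = d v c"
    using dist_edge_le[OF w(1) c] dist_edge_le[OF edge_sym[OF w(1)] c] by linarith
  then show ?thesis
  proof cases
    case 1
    then show ?thesis using w unfolding towards_def by auto
  next
    case 2
    then have "d c w = d c v + 1" using dist_sym c v \<open>w \<in> V\<close> by simp
    then have "d c v + d w u \<le> d c u" using alpha1_metric[OF w(1) c u] w(2) by simp
    then show ?thesis using dist_to_c_le[OF u] dist_sym[OF c] u v two_le_dist w(2) vu by simp
  next
    case 3
    obtain z where z: "E v z" "E z w" "d z c + 1 = d v c"
      using triangle_condition[OF w(1) c, of "d v c"] 3 dist_sym c v \<open>w \<in> V\<close> two_le_dist by auto
    have "z \<in> V" using edge_vertices z by auto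
    have "d v u \<le> d z u + 1" "d z u \<le> d w u + 1"
      using dist_edge_le[OF z(1) u] dist_edge_le[OF z(2) u] .
    moreover have "d z u \<noteq> d v u"
    proof
      assume "d z u = d v u"
      then have "d u z = d u w + 1" using w(2) dist_sym u \<open>z \<in> V\<close> \<open>w \<in> V\<close> by simp
      then have "d u w + d z c \<le> d u c"
        using alpha1_metric[OF edge_sym[OF z(2)] u c] z(3) 3 by simp
      then show False using dist_to_c_le[OF u] dist_sym u \<open>w \<in> V\<close> w(2) z(3) two_le_dist vu
        by simp
    qed
    ultimately have "z \<in> towards v u" using z(1) w(2) unfolding towards_def by simp
    moreover have "z \<in> towards v c" using z unfolding towards_def by simp
    ultimately show ?thesis by blast
  qed
qed

lemma towards_chain:
  assumes diam: "diam V E + 3 \<le> 2 * ecc V E v"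
    and u: "u \<in> V" "d v u = ecc V E v" and u': "u' \<in> V" "d v u' = ecc V E v"
  shows "towards v c \<inter> towards v u \<subseteq> towards v c \<inter> towards v u'
    \<or> towards v c \<inter> towards v u' \<subseteq> towards v c \<inter> towards v u"
proof (rule ccontr)
  assume "\<not> ?thesis"
  then obtain w w' where w: "w \<in> towards v c" "w \<in> towards v u" "w \<notin> towards v u'"
    and w': "w' \<in> towards v c" "w' \<in> towards v u'" "w' \<notin> towards v u" by blast
  have "w \<noteq> w'" using w w' by auto
  then have ww': "E w w'" using towards_clique w(1) w'(1) c by blast
  have e: "E v w" "E v w'" using w(1) w'(1) unfolding towards_def by auto
  then have V: "w \<in> V" "w' \<in> V" using edge_vertices by auto
  have "d w u' \<le> d v u'" "d w' u \<le> d v u"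
    using towards_c_dist_le[OF w(1) u'(1)] towards_c_dist_le[OF w'(1) u(1)] u u' by simp_all
  moreover have "d v u' \<le> d w u' + 1" "d v u \<le> d w' u + 1"
    using dist_edge_le[OF e(1) u'(1)] dist_edge_le[OF e(2) u(1)] .
  ultimately have "d w u' = ecc V E v" "d w' u = ecc V E v"
    using w(3) w'(3) e u u' unfolding towards_def by auto
  moreover have "d w u + 1 = ecc V E v" "d w' u' + 1 = ecc V E v"
    using w(2) w'(2) u u' unfolding towards_def by auto
  ultimately have "d u w + d w' u' \<le> d u u'"
    using alpha1_metric[OF ww' u(1) u'(1)] dist_sym[OF u(1)] V by simp
  then show False using dist_le_diam[OF u(1) u'(1)] dist_sym[OF u(1)] V
      \<open>d w u + 1 = ecc V E v\<close> \<open>d w' u' + 1 = ecc V E v\<close> diam by simp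
qed

lemma towards_all_far:
  assumes "diam V E + 3 \<le> 2 * ecc V E v"
  shows "\<exists>w\<in>towards v c. \<forall>u\<in>V. d v u = ecc V E v \<longrightarrow> w \<in> towards v u"
proof -
  define F where "F = {u \<in> V. d v u = ecc V E v}"
  define G where "G u = towards v c \<inter> towards v u" for u
  have "subset.chain UNIV (G ` F)"
    using towards_chain[OF assms] unfolding subset_chain_def G_def F_def by blast
  moreover have "finite (G ` F)" "G ` F \<noteq> {}"
    using finite_V ecc_attained[OF v] unfolding F_def by auto
  ultimately have "\<Inter>(G ` F) \<in> G ` F" using Inter_in_chain by blast
  then obtain u0 where u0: "u0 \<in> F" "G u0 = \<Inter>(G ` F)" by auto
  then obtain w where "w \<in> G u0"
    using towards_c_meets_towards_far unfolding F_def G_def by blast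
  then have "w \<in> G u" if "u \<in> F" for u using u0(2) that by blast
  then show ?thesis using u0(1) unfolding G_def F_def by auto
qed

end

lemma neighbour_smaller_ecc:
  assumes v: "v \<in> V" and "rad V E < ecc V E v" and diam: "diam V E + 3 \<le> 2 * ecc V E v"
  shows "\<exists>w. E v w \<and> ecc V E w < ecc V E v"
proof -
  obtain c where c: "c \<in> V" "ecc V E c = rad V E" using center_exists by blast
  then have less: "ecc V E c < ecc V E v" using assms by simp
  then have "v \<noteq> c" by auto
  show ?thesis
  proof (cases "d v c = 1")
    case True
    then show ?thesis using dist_eq_1D[OF v c(1)] less by auto
  next
    case False
    then have two: "2 \<le> d v c" using dist_eq_0D[OF v c(1)] \<open>v \<noteq> c\<close> by fastforce
    obtain w where w: "w \<in> towards v c" "\<And>u. u \<in> V \<Longrightarrow> d v u = ecc V E v \<Longrightarrow> w \<in> towards v u"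
      using towards_all_far[OF v c(1) two less diam] by blast
    then have vw: "E v w" unfolding towards_def by simp
    have "ecc V E w \<le> ecc V E v - 1"
    proof (rule ecc_le)
      fix u assume u: "u \<in> V"
      have "d v u \<le> ecc V E v" "d w u \<le> d v u + 1"
        using dist_le_ecc[OF v u] dist_edge_le[OF edge_sym[OF vw] u] .
      moreover have "d w u + 1 = ecc V E v" if "d v u = ecc V E v"
        using w(2)[OF u that] that unfolding towards_def by simp
      moreover have "d w u \<le> d v u" if "ecc V E v \<le> d v u + 1"
        using towards_c_dist_le[OF v c(1) two less w(1) u that] .
      ultimately show "d w u \<le> ecc V E v - 1" by linarith
    qed
    then show ?thesis using vw less by (intro exI[of _ w]) auto
  qed
qed

lemma interval_far_ecc_le:
  assumes "rad V E \<le> T" "diam V E < 2 * T" "s \<in> V" "t \<in> far V E s"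
  shows "\<exists>w\<in>interval V E s t. ecc V E w \<le> T \<and> t \<in> far V E w"
proof -
  have "\<exists>w. E v w \<and> ecc V E w < ecc V E v" if "v \<in> V" "T < ecc V E v" for v
    using neighbour_smaller_ecc[OF that(1)] that assms(1,2) by simp
  from far_descent[OF this assms(3,4)] show ?thesis .
qed

end

theorem proposition7:
  fixes V :: "'a set" and E :: "'a \<Rightarrow> 'a \<Rightarrow> bool"
  assumes "graph V E" and "connected V E" and "chordal V E"
  shows "(diam V E < 2 * rad V E \<longrightarrow>
            (\<forall>s\<in>V. \<forall>t\<in>far V E s. \<exists>w\<in>interval V E s t \<inter> center V E. t \<in> far V E w))
       \<and> (diam V E = 2 * rad V E \<longrightarrow>
            (\<forall>s\<in>V. \<forall>t\<in>far V E s. \<exists>w\<in>interval V E s t \<inter> center1 V E. t \<in> far V E w))"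
proof -
  interpret chordal_graph V E using assms by unfold_locales
  have "\<exists>w\<in>interval V E s t \<inter> center V E. t \<in> far V E w"
    if "diam V E < 2 * rad V E" "s \<in> V" "t \<in> far V E s" for s t
  proof -
    obtain w where "w \<in> interval V E s t" "ecc V E w \<le> rad V E" "t \<in> far V E w"
      using interval_far_ecc_le[of "rad V E" s t] \<open>s \<in> V\<close> \<open>t \<in> far V E s\<close>
        \<open>diam V E < 2 * rad V E\<close> by auto
    moreover have "rad V E \<le> ecc V E w" using calculation rad_le_ecc unfolding interval_def by auto
    ultimately show ?thesis unfolding center_def interval_def by auto
  qed
  moreover have "\<exists>w\<in>interval V E s t \<inter> center1 V E. t \<in> far V E w"
    if "diam V E = 2 * rad V E" "s \<in> V" "t \<in> far V E s" for s t
    using interval_far_ecc_le[of "rad V E + 1"] that unfolding center1_def interval_def by auto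
  ultimately show ?thesis by blast
qed

end
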